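(* Let a countable group $G$ act freely and continuously on a Polish space $X$, let $E$ be an equivalence relation on $X$, and let $H\le G$ (acting on $X$ by restriction). (i) If $E$ is $G$-clopen then $E$ is $H$-clopen. (ii) If $E$ is $H$-clopen and $E\subseteq E^X_H$, then $E$ is $G$-clopen.
   Context: For a group $K$ acting continuously on $X$, a relation $R\subseteq X\times X$ is $K$-clopen if for every $k\in K$ the set $\{x\in X:(x,k\cdot x)\in R\}$ is clopen. $E^X_H$ is the orbit equivalence relation of the $H$-action. The action is free if $g\cdot x\ne x$ for all $x$ and all $g\ne 1_G$. *)

theory Defs
  imports "HOL-Analysis.Analysis" "HOL-Algebra.Group_Action"
begin

definition K_clopen :: "'g set \<Rightarrow> ('g \<Rightarrow> 'a::topological_space \<Rightarrow> 'a) \<Rightarrow> ('a \<times> 'a) set \<Rightarrow> bool" where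
  "K_clopen K act R \<longleftrightarrow>
     (\<forall>k\<in>K. open {x. (x, act k x) \<in> R} \<and> closed {x. (x, act k x) \<in> R})"

definition orbit_eqrel :: "'g set \<Rightarrow> ('g \<Rightarrow> 'a \<Rightarrow> 'a) \<Rightarrow> ('a \<times> 'a) set" where
  "orbit_eqrel H act = {(x, act h x) | x h. h \<in> H}"

end

theory Submission
  imports Defs
begin

text \<open>Part (i) is monotonicity in K. For (ii), if x E g.x then g.x = h.x for some h \<in> H, and
freeness gives g = h; so for g \<notin> H the set of x with x E g.x is empty, hence clopen.\<close>

lemma K_clopen_subset:
  assumes "K_clopen L act R" and "K \<subseteq> L"
  shows "K_clopen K act R"
  using assms unfolding K_clopen_def by blast

lemma K_clopen_extend_empty:
  assumes "K_clopen K act R"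
    and "\<And>l. l \<in> L - K \<Longrightarrow> {x. (x, act l x) \<in> R} = {}"
  shows "K_clopen L act R"
  using assms unfolding K_clopen_def by (metis DiffI open_empty closed_empty)

lemma (in group_action) free_action_eq_imp_eq:
  assumes free: "\<And>k. k \<in> carrier G \<Longrightarrow> \<phi> k x = x \<Longrightarrow> k = \<one>"
    and "x \<in> E" "g \<in> carrier G" "h \<in> carrier G" "\<phi> g x = \<phi> h x"
  shows "g = h"
proof -
  interpret group G
    using group_hom group_hom.axioms(1) by blast
  have "\<phi> (inv h \<otimes> g) x = \<phi> (inv h) (\<phi> g x)"
    using assms(2-4) composition_rule by simp
  also have "\<dots> = x"
    using assms(2,4,5) orbit_sym_aux by simp
  finally have "inv h \<otimes> g = \<one>"
    using free assms(3,4) by simp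
  have "g = h \<otimes> (inv h \<otimes> g)"
    using assms(3,4) by (simp add: m_assoc[symmetric])
  also have "\<dots> = h"
    using \<open>inv h \<otimes> g = \<one>\<close> assms(4) by simp
  finally show ?thesis .
qed

lemma (in group_action) related_outside_subgroup_empty:
  assumes free: "\<And>k x. k \<in> carrier G \<Longrightarrow> \<phi> k x = x \<Longrightarrow> k = \<one>"
    and "subgroup H G" "E = UNIV" "R \<subseteq> orbit_eqrel H \<phi>"
    and "g \<in> carrier G - H"
  shows "{x. (x, \<phi> g x) \<in> R} = {}"
proof (rule ccontr)
  assume "{x. (x, \<phi> g x) \<in> R} \<noteq> {}"
  then obtain x where "(x, \<phi> g x) \<in> orbit_eqrel H \<phi>"
    using assms(4) by blast
  then obtain h where h: "h \<in> H" "\<phi> g x = \<phi> h x"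
    unfolding orbit_eqrel_def by blast
  have "h \<in> carrier G"
    using subgroup.mem_carrier[OF assms(2) h(1)] .
  then have "g = h"
    using free_action_eq_imp_eq[of x g h] free assms(3,5) h(2) by blast
  with h(1) assms(5) show False by simp
qed

theorem lemma3p5:
  fixes G :: "('g, 'b) monoid_scheme"
    and act :: "'g \<Rightarrow> 'a::polish_space \<Rightarrow> 'a"
    and E :: "('a \<times> 'a) set"
    and H :: "'g set"
  assumes "group G"
    and "countable (carrier G)"
    and "group_action G UNIV act"
    and "\<And>g. g \<in> carrier G \<Longrightarrow> continuous_on UNIV (act g)"
    and "\<And>g x. g \<in> carrier G \<Longrightarrow> g \<noteq> \<one>\<^bsub>G\<^esub> \<Longrightarrow> act g x \<noteq> x"
    and "equiv UNIV E"
    and "subgroup H G"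
  shows "(K_clopen (carrier G) act E \<longrightarrow> K_clopen H act E)
       \<and> (K_clopen H act E \<and> E \<subseteq> orbit_eqrel H act \<longrightarrow> K_clopen (carrier G) act E)"
proof -
  interpret group_action G UNIV act by fact
  have free: "\<And>k x. k \<in> carrier G \<Longrightarrow> act k x = x \<Longrightarrow> k = \<one>\<^bsub>G\<^esub>"
    using assms(5) by blast
  have "H \<subseteq> carrier G"
    using assms(7) subgroup.subset by blast
  moreover have "K_clopen (carrier G) act E"
    if "K_clopen H act E" "E \<subseteq> orbit_eqrel H act"
  proof (rule K_clopen_extend_empty[OF that(1)])
    show "{x. (x, act g x) \<in> E} = {}" if "g \<in> carrier G - H" for g
      using related_outside_subgroup_empty[OF free assms(7) refl \<open>E \<subseteq> orbit_eqrel H act\<close> that] .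
  qed
  ultimately show ?thesis
    by (auto intro: K_clopen_subset)
qed

end
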